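(* Let $\lambda>0$ and $\mu=\nu>0$, and equip $\Sigma^3$ with the generalised Riemannian Berger metric $g$ described in the context. For $\theta>0$ let $U^2_\theta\subset\Sigma^3$ be the torus $\{(\cosh\theta\, e^{i\alpha},\sinh\theta\, e^{i\beta}):\alpha,\beta\in\mathbb R\}$, and let $H_g$ be its mean curvature vector in $(\Sigma^3,g)$. Then for every real number $C>\frac1\mu$ there exists $\theta>0$ such that the mean curvature of $U^2_\theta$ is constant and satisfies $\|H_g\|\equiv C$.
   Context: $\Sigma^3=\{(z,w)\in\mathbb C^2: |z|^2-|w|^2=1\}$ is a Lie group with multiplication $(z_1,w_1)\cdot(z_2,w_2)=(z_1z_2+\bar w_1w_2,\ w_1z_2+\bar z_1w_2)$ and inverse $(z,w)^{-1}=(\bar z,-w)$; the same formula defines $p\cdot v$ for $v\in\mathbb C^2$. Let $\langle (z_1,w_1),(z_2,w_2)\rangle=\mathrm{Re}(\bar z_1z_2+\bar w_1w_2)$. For $\lambda,\mu,\nu>0$ the left-invariant Riemannian metric is $g_p(A,B)=\lambda^2\langle p^{-1}A,(i,0)\rangle\langle p^{-1}B,(i,0)\rangle+\mu^2\langle p^{-1}A,(0,-1)\rangle\langle p^{-1}B,(0,-1)\rangle+\nu^2\langle p^{-1}A,(0,i)\rangle\langle p^{-1}B,(0,i)\rangle+\langle p^{-1}A,(1,0)\rangle\langle p^{-1}B,(1,0)\rangle$ for $A,B\in T_p\Sigma^3$. For a surface in $(\Sigma^3,g)$ with $g$-orthonormal tangent basis $V_1,V_2$, the mean curvature vector is $H_g=\tfrac12(B(V_1,V_1)+B(V_2,V_2))$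 with $B$ the second fundamental form, and $\|H_g\|=\sqrt{g(H_g,H_g)}$. *)

theory Defs
  imports "HOL-Analysis.Analysis"
begin

definition Sigma3 :: "(complex \<times> complex) set" where
  "Sigma3 = {p. (cmod (fst p))\<^sup>2 - (cmod (snd p))\<^sup>2 = 1}"

definition smul :: "complex \<times> complex \<Rightarrow> complex \<times> complex \<Rightarrow> complex \<times> complex" where
  "smul p q = (fst p * fst q + cnj (snd p) * snd q, snd p * fst q + cnj (fst p) * snd q)"

definition sinv :: "complex \<times> complex \<Rightarrow> complex \<times> complex" where
  "sinv p = (cnj (fst p), - snd p)"

definition cip :: "complex \<times> complex \<Rightarrow> complex \<times> complex \<Rightarrow> real" where
  "cip a b = Re (cnj (fst a) * fst b + cnj (snd a) * snd b)"

text \<open>Tangent space of Sigma^3 at p: kernel of the differential of |z|^2 - |w|^2.\<close>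
definition tangent_Sigma3 :: "complex \<times> complex \<Rightarrow> (complex \<times> complex) set" where
  "tangent_Sigma3 p = {v. 2 * Re (cnj (fst p) * fst v) - 2 * Re (cnj (snd p) * snd v) = 0}"

text \<open>The left-invariant metric g (the same formula, taken for all A, B in C^2 and all p,
  gives a Riemannian metric on a neighbourhood of Sigma^3 in C^2 = R^4 extending g).\<close>
definition gmet :: "real \<Rightarrow> real \<Rightarrow> real \<Rightarrow> complex \<times> complex \<Rightarrow> complex \<times> complex \<Rightarrow> complex \<times> complex \<Rightarrow> real" where
  "gmet lam mu nu p A B =
     lam\<^sup>2 * cip (smul (sinv p) A) (\<i>, 0) * cip (smul (sinv p) B) (\<i>, 0)
   + mu\<^sup>2 * cip (smul (sinv p) A) (0, -1) * cip (smul (sinv p) B) (0, -1)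
   + nu\<^sup>2 * cip (smul (sinv p) A) (0, \<i>) * cip (smul (sinv p) B) (0, \<i>)
   + cip (smul (sinv p) A) (1, 0) * cip (smul (sinv p) B) (1, 0)"

definition dgmet :: "real \<Rightarrow> real \<Rightarrow> real \<Rightarrow> complex \<times> complex \<Rightarrow> complex \<times> complex \<Rightarrow> complex \<times> complex \<Rightarrow> complex \<times> complex \<Rightarrow> real" where
  "dgmet lam mu nu p X A B = deriv (\<lambda>t. gmet lam mu nu (p + t *\<^sub>R X) A B) 0"

definition pd1 :: "(real \<times> real \<Rightarrow> complex \<times> complex) \<Rightarrow> real \<times> real \<Rightarrow> complex \<times> complex" where
  "pd1 f u = vector_derivative (\<lambda>t. f (t, snd u)) (at (fst u))"

definition pd2 :: "(real \<times> real \<Rightarrow> complex \<times> complex) \<Rightarrow> real \<times> real \<Rightarrow> complex \<times> complex" where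
  "pd2 f u = vector_derivative (\<lambda>t. f (fst u, t)) (at (snd u))"

text \<open>Koszul/Christoffel formula: inner product g(nabla_X Y, Z) of the Levi-Civita covariant
  derivative, where Y is the surface coordinate field with ordinary derivative a along X.\<close>
definition cov_ip :: "real \<Rightarrow> real \<Rightarrow> real \<Rightarrow> complex \<times> complex \<Rightarrow> complex \<times> complex \<Rightarrow> complex \<times> complex
    \<Rightarrow> complex \<times> complex \<Rightarrow> complex \<times> complex \<Rightarrow> real" where
  "cov_ip lam mu nu p a X Y Z = gmet lam mu nu p a Z
     + (dgmet lam mu nu p X Y Z + dgmet lam mu nu p Y X Z - dgmet lam mu nu p Z X Y) / 2"

text \<open>Mean curvature vector H_g of the immersed surface f at parameter u, as a surface in
  (Sigma^3, g): the unique vector in the normal space of the surface inside T_p Sigma^3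
  whose g-inner product with every normal Z is (1/2) sum_ij g^ij g(nabla_i f_j, Z).
  This equals (1/2)(B(V1,V1)+B(V2,V2)) for any g-orthonormal tangent basis V1, V2.\<close>
definition mean_curv_vec :: "real \<Rightarrow> real \<Rightarrow> real \<Rightarrow> (real \<times> real \<Rightarrow> complex \<times> complex) \<Rightarrow> real \<times> real \<Rightarrow> complex \<times> complex" where
  "mean_curv_vec lam mu nu f u =
    (let p = f u; f1 = pd1 f u; f2 = pd2 f u;
         f11 = pd1 (pd1 f) u; f12 = pd2 (pd1 f) u; f22 = pd2 (pd2 f) u;
         g = gmet lam mu nu p;
         g11 = g f1 f1; g12 = g f1 f2; g22 = g f2 f2; d = g11 * g22 - g12\<^sup>2;
         Nsp = {Z \<in> tangent_Sigma3 p. g Z f1 = 0 \<and> g Z f2 = 0};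
         S = (\<lambda>Z. ((g22 / d) * cov_ip lam mu nu p f11 f1 f1 Z
                   - 2 * (g12 / d) * cov_ip lam mu nu p f12 f1 f2 Z
                   + (g11 / d) * cov_ip lam mu nu p f22 f2 f2 Z) / 2)
     in THE H. H \<in> Nsp \<and> (\<forall>Z\<in>Nsp. g H Z = S Z))"

definition mean_curv_norm :: "real \<Rightarrow> real \<Rightarrow> real \<Rightarrow> (real \<times> real \<Rightarrow> complex \<times> complex) \<Rightarrow> real \<times> real \<Rightarrow> real" where
  "mean_curv_norm lam mu nu f u =
     sqrt (gmet lam mu nu (f u) (mean_curv_vec lam mu nu f u) (mean_curv_vec lam mu nu f u))"

definition torusU :: "real \<Rightarrow> real \<times> real \<Rightarrow> complex \<times> complex" where
  "torusU \<theta> u = (complex_of_real (cosh \<theta>) * cis (fst u), complex_of_real (sinh \<theta>) * cis (snd u))"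

end

theory Submission
  imports Defs
begin

(* The metric is left-invariant: g_p(A, B) is a constant quadratic form evaluated at p^-1 A and
   p^-1 B, and so are its directional derivatives. For mu = nu the rotations
   (z, w) |-> (e^(i alpha) z, e^(i beta) w) are isometries, since they only rotate the
   w-component of p^-1 A, on which the form is mu^2 |w|^2. They act transitively on U_theta,
   so it suffices to compute at the point (cosh theta, sinh theta). There the normal line of
   U_theta in T Sigma^3 is spanned by (sinh theta, cosh theta), of g-length mu, and the
   Koszul formula gives H_g = -coth(2 theta) / mu^2 times this vector. Hence
   ||H_g|| = coth(2 theta) / mu, which takes every value C > 1/mu, at
   theta = artanh(1 / (mu C)) / 2. *)

definition left_triv :: "complex \<times> complex \<Rightarrow> complex \<times> complex \<Rightarrow> complex \<times> complex" where
  "left_triv p A = smul (sinv p) A"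

lemma left_triv_Pair [simp]:
  "left_triv (p1, p2) (a1, a2) = (cnj p1 * a1 - cnj p2 * a2, p1 * a2 - p2 * a1)"
  by (simp add: left_triv_def smul_def sinv_def algebra_simps)

definition gmet_id :: "real \<Rightarrow> real \<Rightarrow> real \<Rightarrow> complex \<times> complex \<Rightarrow> complex \<times> complex \<Rightarrow> real" where
  "gmet_id lam mu nu x y = lam\<^sup>2 * Im (fst x) * Im (fst y) + mu\<^sup>2 * Re (snd x) * Re (snd y)
     + nu\<^sup>2 * Im (snd x) * Im (snd y) + Re (fst x) * Re (fst y)"

lemma gmet_eq_gmet_id: "gmet lam mu nu p A B = gmet_id lam mu nu (left_triv p A) (left_triv p B)"
  by (simp add: gmet_def gmet_id_def left_triv_def cip_def)

lemma left_triv_add_left: "left_triv (p + q) A = left_triv p A + left_triv q A"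
  by (cases p, cases q, cases A) (simp add: algebra_simps)

lemma left_triv_scaleR_left: "left_triv (r *\<^sub>R p) A = r *\<^sub>R left_triv p A"
  by (cases p, cases A) (simp add: scaleR_conv_of_real algebra_simps)

lemma left_triv_scaleR_right: "left_triv p (r *\<^sub>R A) = r *\<^sub>R left_triv p A"
  by (cases p, cases A) (simp add: scaleR_conv_of_real algebra_simps)

lemma gmet_scaleR_left: "gmet lam mu nu p (r *\<^sub>R A) B = r * gmet lam mu nu p A B"
  by (simp add: gmet_eq_gmet_id left_triv_scaleR_right gmet_id_def algebra_simps)

lemma gmet_scaleR_right: "gmet lam mu nu p A (r *\<^sub>R B) = r * gmet lam mu nu p A B"
  by (simp add: gmet_eq_gmet_id left_triv_scaleR_right gmet_id_def algebra_simps)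

lemma dgmet_eq:
  "dgmet lam mu nu p X A B =
     gmet_id lam mu nu (left_triv X A) (left_triv p B) + gmet_id lam mu nu (left_triv p A) (left_triv X B)"
proof -
  have "((\<lambda>t. gmet lam mu nu (p + t *\<^sub>R X) A B) has_real_derivative
     gmet_id lam mu nu (left_triv X A) (left_triv p B) + gmet_id lam mu nu (left_triv p A) (left_triv X B)) (at 0)"
    unfolding gmet_eq_gmet_id left_triv_add_left left_triv_scaleR_left gmet_id_def
    by (auto intro!: derivative_eq_intros simp: algebra_simps)
  then show ?thesis
    unfolding dgmet_def by (rule DERIV_imp_deriv)
qed

lemma cov_ip_scaleR: "cov_ip lam mu nu p a X Y (r *\<^sub>R Z) = r * cov_ip lam mu nu p a X Y Z"
  by (simp add: cov_ip_def gmet_scaleR_right dgmet_eq left_triv_scaleR_left left_triv_scaleR_right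
      gmet_id_def algebra_simps)

lemma tangent_Sigma3_iff: "Z \<in> tangent_Sigma3 p \<longleftrightarrow> Re (fst (left_triv p Z)) = 0"
  by (cases p, cases Z) (auto simp: tangent_Sigma3_def)

lemma smul_left_triv:
  assumes "p \<in> Sigma3"
  shows "smul p (left_triv p Z) = Z"
proof -
  obtain p1 p2 z1 z2 where p: "p = (p1, p2)" and Z: "Z = (z1, z2)"
    by (cases p, cases Z)
  have "(cmod p1)\<^sup>2 - (cmod p2)\<^sup>2 = 1"
    using assms by (simp add: Sigma3_def p)
  then have det: "cnj p1 * p1 - cnj p2 * p2 = 1"
    by (metis complex_norm_square mult.commute of_real_1 of_real_diff)
  have "p1 * (cnj p1 * z1 - cnj p2 * z2) + cnj p2 * (p1 * z2 - p2 * z1) = (cnj p1 * p1 - cnj p2 * p2) * z1"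
       "p2 * (cnj p1 * z1 - cnj p2 * z2) + cnj p1 * (p1 * z2 - p2 * z1) = (cnj p1 * p1 - cnj p2 * p2) * z2"
    by (simp_all add: algebra_simps)
  then show ?thesis
    by (simp add: p Z smul_def det)
qed

lemma left_triv_inject:
  assumes "p \<in> Sigma3" and "left_triv p Z = left_triv p W"
  shows "Z = W"
  by (metis assms smul_left_triv)

definition torus_act :: "real \<times> real \<Rightarrow> complex \<times> complex \<Rightarrow> complex \<times> complex" where
  "torus_act u z = (cis (fst u) * fst z, cis (snd u) * snd z)"

lemma torus_act_scaleR: "torus_act u (r *\<^sub>R Z) = r *\<^sub>R torus_act u Z"
  by (simp add: torus_act_def scaleR_conv_of_real algebra_simps)

lemma torus_act_inverse: "torus_act u (torus_act (- u) Z) = Z"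
  by (simp add: torus_act_def mult.assoc[symmetric] cis_mult)

lemma left_triv_torus_act:
  "left_triv (torus_act u p) (torus_act u X)
     = (fst (left_triv p X), cis (fst u + snd u) * snd (left_triv p X))"
proof -
  obtain p1 p2 x1 x2 where p: "p = (p1, p2)" and X: "X = (x1, x2)"
    by (cases p, cases X)
  have cancel: "cnj (cis t * z) * (cis t * w) = cnj z * w" for t z w
    by (simp add: cis_cnj algebra_simps) (simp add: mult.assoc[symmetric] cis_mult)
  have "left_triv (torus_act u p) (torus_act u X)
      = (cnj (cis (fst u) * p1) * (cis (fst u) * x1) - cnj (cis (snd u) * p2) * (cis (snd u) * x2),
         cis (fst u) * p1 * (cis (snd u) * x2) - cis (snd u) * p2 * (cis (fst u) * x1))"
    by (simp add: p X torus_act_def del: complex_cnj_mult)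
  also have "\<dots> = (cnj p1 * x1 - cnj p2 * x2, cis (fst u) * cis (snd u) * (p1 * x2 - p2 * x1))"
    unfolding cancel by (simp add: algebra_simps)
  finally show ?thesis
    by (simp add: p X cis_mult)
qed

lemma gmet_id_rotate_snd:
  assumes "cmod e = 1"
  shows "gmet_id lam mu mu (fst x, e * snd x) (fst y, e * snd y) = gmet_id lam mu mu x y"
proof -
  have "(Re e)\<^sup>2 + (Im e)\<^sup>2 = 1"
    using assms by (simp add: cmod_power2[symmetric])
  moreover have "Re (e * v) * Re (e * w) + Im (e * v) * Im (e * w)
      = ((Re e)\<^sup>2 + (Im e)\<^sup>2) * (Re v * Re w + Im v * Im w)" for v w
    by (simp add: algebra_simps power2_eq_square)
  ultimately show ?thesis
    by (simp add: gmet_id_def distrib_left[symmetric] mult.assoc)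
qed

lemma gmet_torus_act:
  "gmet lam mu mu (torus_act u p) (torus_act u A) (torus_act u B) = gmet lam mu mu p A B"
  by (simp add: gmet_eq_gmet_id left_triv_torus_act gmet_id_rotate_snd)

lemma dgmet_torus_act:
  "dgmet lam mu mu (torus_act u p) (torus_act u X) (torus_act u A) (torus_act u B)
     = dgmet lam mu mu p X A B"
  by (simp add: dgmet_eq left_triv_torus_act gmet_id_rotate_snd)

lemma cov_ip_torus_act:
  "cov_ip lam mu mu (torus_act u p) (torus_act u v) (torus_act u X) (torus_act u Y) (torus_act u Z)
     = cov_ip lam mu mu p v X Y Z"
  by (simp add: cov_ip_def gmet_torus_act dgmet_torus_act)

lemma tangent_Sigma3_torus_act:
  "torus_act u Z \<in> tangent_Sigma3 (torus_act u p) \<longleftrightarrow> Z \<in> tangent_Sigma3 p"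
  by (simp add: tangent_Sigma3_iff left_triv_torus_act)

lemma torusU_eq_torus_act: "torusU \<theta> = (\<lambda>u. torus_act u (of_real (cosh \<theta>), of_real (sinh \<theta>)))"
  by (auto simp: torusU_def torus_act_def mult.commute)

lemma has_vector_derivative_cis_mult:
  "((\<lambda>t. cis t * z) has_vector_derivative \<i> * (cis t * z)) (at t)"
  unfolding has_vector_derivative_def
  by (auto intro!: derivative_eq_intros simp: algebra_simps)

lemma pd1_torus_act: "pd1 (\<lambda>u. torus_act u z) = (\<lambda>u. torus_act u (\<i> * fst z, 0))"
proof
  fix u :: "real \<times> real"
  have "((\<lambda>t. torus_act (t, snd u) z) has_vector_derivative torus_act u (\<i> * fst z, 0)) (at (fst u))"
    unfolding torus_act_def
    by (auto intro!: has_vector_derivative_Pair has_vector_derivative_cis_mult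
        simp: mult.assoc mult.left_commute)
  then show "pd1 (\<lambda>u. torus_act u z) u = torus_act u (\<i> * fst z, 0)"
    unfolding pd1_def by (rule vector_derivative_at)
qed

lemma pd2_torus_act: "pd2 (\<lambda>u. torus_act u z) = (\<lambda>u. torus_act u (0, \<i> * snd z))"
proof
  fix u :: "real \<times> real"
  have "((\<lambda>t. torus_act (fst u, t) z) has_vector_derivative torus_act u (0, \<i> * snd z)) (at (snd u))"
    unfolding torus_act_def
    by (auto intro!: has_vector_derivative_Pair has_vector_derivative_cis_mult
        simp: mult.assoc mult.left_commute)
  then show "pd2 (\<lambda>u. torus_act u z) u = torus_act u (0, \<i> * snd z)"
    unfolding pd2_def by (rule vector_derivative_at)
qed

lemma the_eq_on_line:
  fixes g :: "'a::real_vector \<Rightarrow> 'a \<Rightarrow> real" and S :: "'a \<Rightarrow> real"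
  assumes V: "V = range (\<lambda>r. r *\<^sub>R N)"
    and g: "\<And>r t. g (r *\<^sub>R N) (t *\<^sub>R N) = r * t * g N N" and "g N N \<noteq> 0"
    and S: "\<And>r. S (r *\<^sub>R N) = r * S N"
  shows "(THE H. H \<in> V \<and> (\<forall>Z\<in>V. g H Z = S Z)) = (S N / g N N) *\<^sub>R N"
proof (rule the_equality)
  show "(S N / g N N) *\<^sub>R N \<in> V \<and> (\<forall>Z\<in>V. g ((S N / g N N) *\<^sub>R N) Z = S Z)"
    using \<open>g N N \<noteq> 0\<close> by (auto simp: V g S)
next
  fix H
  assume H: "H \<in> V \<and> (\<forall>Z\<in>V. g H Z = S Z)"
  then obtain h where h: "H = h *\<^sub>R N"
    by (auto simp: V)
  have "N \<in> V"
    unfolding V by (metis rangeI scaleR_one)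
  then have "h * g N N = S N"
    using H g[of h 1] by (simp add: h)
  then show "H = (S N / g N N) *\<^sub>R N"
    using \<open>g N N \<noteq> 0\<close> by (simp add: h field_simps)
qed

lemma torus_base_gmet:
  fixes c s lam mu :: real
  shows "gmet lam mu mu (of_real c, of_real s) (\<i> * c, 0) (\<i> * c, 0) = c\<^sup>2 * (lam\<^sup>2 * c\<^sup>2 + mu\<^sup>2 * s\<^sup>2)"
    and "gmet lam mu mu (of_real c, of_real s) (0, \<i> * s) (0, \<i> * s) = s\<^sup>2 * (lam\<^sup>2 * s\<^sup>2 + mu\<^sup>2 * c\<^sup>2)"
    and "gmet lam mu mu (of_real c, of_real s) (\<i> * c, 0) (0, \<i> * s) = - ((lam\<^sup>2 + mu\<^sup>2) * c\<^sup>2 * s\<^sup>2)"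
    and "gmet lam mu mu (of_real c, of_real s) (of_real s, of_real c) (of_real s, of_real c)
      = mu\<^sup>2 * (c\<^sup>2 - s\<^sup>2)\<^sup>2"
  by (simp_all add: gmet_eq_gmet_id gmet_id_def power2_eq_square algebra_simps)

lemma torus_base_cov_ip:
  fixes c s lam mu :: real
  shows "cov_ip lam mu mu (of_real c, of_real s) (- of_real c, 0) (\<i> * c, 0) (\<i> * c, 0) (of_real s, of_real c)
      = - (c * s * (mu\<^sup>2 * (c\<^sup>2 + s\<^sup>2) + 2 * lam\<^sup>2 * c\<^sup>2))"
    and "cov_ip lam mu mu (of_real c, of_real s) (0, - of_real s) (0, \<i> * s) (0, \<i> * s) (of_real s, of_real c)
      = - (c * s * (mu\<^sup>2 * (c\<^sup>2 + s\<^sup>2) + 2 * lam\<^sup>2 * s\<^sup>2))"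
    and "cov_ip lam mu mu (of_real c, of_real s) (0, 0) (\<i> * c, 0) (0, \<i> * s) (of_real s, of_real c)
      = (lam\<^sup>2 + mu\<^sup>2) * c * s * (c\<^sup>2 + s\<^sup>2)"
  by (simp_all add: cov_ip_def dgmet_eq gmet_eq_gmet_id gmet_id_def zero_prod_def
      power2_eq_square field_simps)

lemma torus_base_normal_space:
  fixes c s lam mu :: real
  assumes cs: "c\<^sup>2 - s\<^sup>2 = 1" and "s \<noteq> 0" "lam \<noteq> 0" "mu \<noteq> 0"
  shows "{Z \<in> tangent_Sigma3 (of_real c, of_real s).
            gmet lam mu mu (of_real c, of_real s) Z (\<i> * c, 0) = 0
          \<and> gmet lam mu mu (of_real c, of_real s) Z (0, \<i> * s) = 0}
    = range (\<lambda>r. r *\<^sub>R (of_real s, of_real c))"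
    (is "?V = range (\<lambda>r. r *\<^sub>R ?N)")
proof
  have "complex_of_real c * complex_of_real c - complex_of_real s * complex_of_real s = 1"
    using cs by (metis of_real_1 of_real_diff of_real_mult power2_eq_square)
  then have N: "left_triv (of_real c, of_real s) ?N = (0, 1)"
    by simp
  show "range (\<lambda>r. r *\<^sub>R ?N) \<subseteq> ?V"
    by (auto simp: tangent_Sigma3_iff left_triv_scaleR_right gmet_scaleR_left N
        gmet_eq_gmet_id gmet_id_def)
  show "?V \<subseteq> range (\<lambda>r. r *\<^sub>R ?N)"
  proof
    fix Z
    assume Z: "Z \<in> ?V"
    \<comment> \<open>In the left trivialisation, tangency kills the real part of the first component and
      orthogonality to the two coordinate fields kills both imaginary parts.\<close>
    obtain x1 x2 where x: "left_triv (of_real c, of_real s) Z = (x1, x2)"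
      by fastforce
    have re1: "Re x1 = 0"
      using Z by (simp add: tangent_Sigma3_iff x)
    have eq1: "lam\<^sup>2 * c\<^sup>2 * Im x1 - mu\<^sup>2 * c * s * Im x2 = 0"
      and eq2: "mu\<^sup>2 * c * s * Im x2 - lam\<^sup>2 * s\<^sup>2 * Im x1 = 0"
      using Z by (simp_all add: gmet_eq_gmet_id x gmet_id_def power2_eq_square algebra_simps)
    have "lam\<^sup>2 * (c\<^sup>2 - s\<^sup>2) * Im x1 = 0"
      using eq1 eq2 by (simp add: algebra_simps)
    then have im1: "Im x1 = 0"
      using cs \<open>lam \<noteq> 0\<close> by simp
    have "c \<noteq> 0"
      using cs by (cases "c = 0") (auto, smt (verit) zero_le_power2)
    then have im2: "Im x2 = 0"
      using eq1 im1 \<open>s \<noteq> 0\<close> \<open>mu \<noteq> 0\<close> by simp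
    have "left_triv (of_real c, of_real s) Z = left_triv (of_real c, of_real s) (Re x2 *\<^sub>R ?N)"
      using re1 im1 im2 unfolding left_triv_scaleR_right N by (simp add: x complex_eq_iff)
    then have "Z = Re x2 *\<^sub>R ?N"
      by (rule left_triv_inject[rotated]) (use cs in \<open>simp add: Sigma3_def\<close>)
    then show "Z \<in> range (\<lambda>r. r *\<^sub>R ?N)"
      by blast
  qed
qed

lemma torus_mean_curv_coeff:
  fixes c s lam mu :: real
  assumes "c \<noteq> 0" "s \<noteq> 0" "lam \<noteq> 0" "mu \<noteq> 0" "c\<^sup>2 \<noteq> s\<^sup>2"
  defines "g11 \<equiv> c\<^sup>2 * (lam\<^sup>2 * c\<^sup>2 + mu\<^sup>2 * s\<^sup>2)" and "g22 \<equiv> s\<^sup>2 * (lam\<^sup>2 * s\<^sup>2 + mu\<^sup>2 * c\<^sup>2)"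
    and "g12 \<equiv> - ((lam\<^sup>2 + mu\<^sup>2) * c\<^sup>2 * s\<^sup>2)"
  defines "d \<equiv> g11 * g22 - g12\<^sup>2"
  shows "((g22 / d) * - (c * s * (mu\<^sup>2 * (c\<^sup>2 + s\<^sup>2) + 2 * lam\<^sup>2 * c\<^sup>2))
       - 2 * (g12 / d) * ((lam\<^sup>2 + mu\<^sup>2) * c * s * (c\<^sup>2 + s\<^sup>2))
       + (g11 / d) * - (c * s * (mu\<^sup>2 * (c\<^sup>2 + s\<^sup>2) + 2 * lam\<^sup>2 * s\<^sup>2))) / 2
    = - (c\<^sup>2 + s\<^sup>2) / (2 * c * s)"
proof -
  \<comment> \<open>lam drops out: determinant and numerator share the factor lam^2 mu^2 (c^2 - s^2)^2.\<close>
  have d: "d = lam\<^sup>2 * mu\<^sup>2 * c\<^sup>2 * s\<^sup>2 * (c\<^sup>2 - s\<^sup>2)\<^sup>2"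
    unfolding d_def g11_def g22_def g12_def by algebra
  have "d \<noteq> 0"
    using assms(1-5) by (simp add: d)
  have num: "g22 * - (c * s * (mu\<^sup>2 * (c\<^sup>2 + s\<^sup>2) + 2 * lam\<^sup>2 * c\<^sup>2))
       - 2 * g12 * ((lam\<^sup>2 + mu\<^sup>2) * c * s * (c\<^sup>2 + s\<^sup>2))
       + g11 * - (c * s * (mu\<^sup>2 * (c\<^sup>2 + s\<^sup>2) + 2 * lam\<^sup>2 * s\<^sup>2))
     = - (c * s * (c\<^sup>2 + s\<^sup>2)) * lam\<^sup>2 * mu\<^sup>2 * (c\<^sup>2 - s\<^sup>2)\<^sup>2"
    unfolding g11_def g22_def g12_def by algebra
  have "((g22 / d) * - (c * s * (mu\<^sup>2 * (c\<^sup>2 + s\<^sup>2) + 2 * lam\<^sup>2 * c\<^sup>2))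
       - 2 * (g12 / d) * ((lam\<^sup>2 + mu\<^sup>2) * c * s * (c\<^sup>2 + s\<^sup>2))
       + (g11 / d) * - (c * s * (mu\<^sup>2 * (c\<^sup>2 + s\<^sup>2) + 2 * lam\<^sup>2 * s\<^sup>2))) / 2
    = - (c * s * (c\<^sup>2 + s\<^sup>2)) * lam\<^sup>2 * mu\<^sup>2 * (c\<^sup>2 - s\<^sup>2)\<^sup>2 / (2 * d)"
    unfolding num[symmetric] using \<open>d \<noteq> 0\<close> by (simp add: field_simps)
  also have "\<dots> = (- (c\<^sup>2 + s\<^sup>2) * (c * s * lam\<^sup>2 * mu\<^sup>2 * (c\<^sup>2 - s\<^sup>2)\<^sup>2))
      / (2 * c * s * (c * s * lam\<^sup>2 * mu\<^sup>2 * (c\<^sup>2 - s\<^sup>2)\<^sup>2))"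
    unfolding d by (rule arg_cong2[where f = "(/)"]) algebra+
  also have "\<dots> = - (c\<^sup>2 + s\<^sup>2) / (2 * c * s)"
    using assms(1-5) by (intro mult_divide_mult_cancel_right) simp
  finally show ?thesis .
qed

lemma mean_curv_vec_torus_act:
  fixes c s lam mu :: real
  assumes cs: "c\<^sup>2 - s\<^sup>2 = 1" and "s \<noteq> 0" "lam \<noteq> 0" "mu \<noteq> 0"
  shows "mean_curv_vec lam mu mu (\<lambda>u. torus_act u (of_real c, of_real s)) u
    = (- (c\<^sup>2 + s\<^sup>2) / (2 * c * s * mu\<^sup>2)) *\<^sub>R torus_act u (of_real s, of_real c)"
proof -
  let ?p = "(of_real c, of_real s) :: complex \<times> complex"
  let ?N = "(of_real s, of_real c) :: complex \<times> complex"
  let ?act = "torus_act u"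
  let ?V = "{Z \<in> tangent_Sigma3 (?act ?p). gmet lam mu mu (?act ?p) Z (?act (\<i> * c, 0)) = 0
               \<and> gmet lam mu mu (?act ?p) Z (?act (0, \<i> * s)) = 0}"
  have mem: "?act W \<in> ?V \<longleftrightarrow> W \<in> range (\<lambda>r. r *\<^sub>R ?N)" for W
    using torus_base_normal_space[OF assms] by (auto simp: tangent_Sigma3_torus_act gmet_torus_act)
  have V: "?V = range (\<lambda>r. r *\<^sub>R ?act ?N)"
  proof (intro set_eqI iffI)
    fix Z
    assume "Z \<in> ?V"
    then have "torus_act (- u) Z \<in> range (\<lambda>r. r *\<^sub>R ?N)"
      using mem[of "torus_act (- u) Z"] by (simp add: torus_act_inverse)
    then obtain r where "torus_act (- u) Z = r *\<^sub>R ?N"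
      by blast
    then have "Z = r *\<^sub>R ?act ?N"
      by (metis torus_act_inverse torus_act_scaleR)
    then show "Z \<in> range (\<lambda>r. r *\<^sub>R ?act ?N)"
      by blast
  next
    fix Z
    assume "Z \<in> range (\<lambda>r. r *\<^sub>R ?act ?N)"
    then obtain r where "Z = ?act (r *\<^sub>R ?N)"
      unfolding torus_act_scaleR by blast
    then show "Z \<in> ?V"
      using mem by blast
  qed
  have c: "c \<noteq> 0"
    using cs by (cases "c = 0") (auto, smt (verit) zero_le_power2)
  have gNN: "gmet lam mu mu (?act ?p) (?act ?N) (?act ?N) = mu\<^sup>2"
    using cs by (simp add: gmet_torus_act torus_base_gmet)
  have "c\<^sup>2 \<noteq> s\<^sup>2"
    using cs by auto
  have pd: "(\<i> * (\<i> * complex_of_real c), 0) = (- of_real c, 0)" "(0, \<i> * 0) = (0, 0)"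
    "(0, \<i> * (\<i> * complex_of_real s)) = (0, - of_real s)"
    by simp_all
  show ?thesis
    unfolding mean_curv_vec_def Let_def pd1_torus_act pd2_torus_act fst_conv snd_conv pd
    apply (subst the_eq_on_line[OF V])
    subgoal by (simp add: gmet_scaleR_left gmet_scaleR_right)
    subgoal using gNN \<open>mu \<noteq> 0\<close> by simp
    subgoal by (simp add: cov_ip_scaleR algebra_simps)
    subgoal
      unfolding gmet_torus_act cov_ip_torus_act torus_base_gmet torus_base_cov_ip
        torus_mean_curv_coeff[OF c assms(2-4) \<open>c\<^sup>2 \<noteq> s\<^sup>2\<close>]
      using cs by (simp add: field_simps)
    done
qed

lemma mean_curv_norm_torusU:
  assumes "\<theta> > 0" and "lam \<noteq> 0" and "mu > 0"
  shows "mean_curv_norm lam mu mu (torusU \<theta>) u = 1 / (mu * tanh (2 * \<theta>))"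
proof -
  let ?c = "cosh \<theta>" and ?s = "sinh \<theta>"
  let ?act = "torus_act u"
  let ?N = "(of_real ?s, of_real ?c) :: complex \<times> complex"
  let ?k = "- (?c\<^sup>2 + ?s\<^sup>2) / (2 * ?c * ?s * mu\<^sup>2)"
  have cs: "?c\<^sup>2 - ?s\<^sup>2 = 1"
    by (rule hyperbolic_pythagoras)
  have "?s > 0"
    using assms(1) by simp
  have H: "mean_curv_vec lam mu mu (torusU \<theta>) u = ?k *\<^sub>R ?act ?N"
    unfolding torusU_eq_torus_act
    using mean_curv_vec_torus_act[OF cs] \<open>?s > 0\<close> assms(2,3) by simp
  have gNN: "gmet lam mu mu (?act (of_real ?c, of_real ?s)) (?act ?N) (?act ?N) = mu\<^sup>2"
    using cs by (simp add: gmet_torus_act torus_base_gmet)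
  have "mean_curv_norm lam mu mu (torusU \<theta>) u = sqrt (?k * (?k * mu\<^sup>2))"
    unfolding mean_curv_norm_def H
    unfolding torusU_eq_torus_act gmet_scaleR_left gmet_scaleR_right gNN ..
  also have "\<dots> = sqrt ((?k * mu)\<^sup>2)"
    by (rule arg_cong[where f = sqrt]) (simp add: power2_eq_square)
  also have "\<dots> = \<bar>?k * mu\<bar>"
    by (rule real_sqrt_abs)
  also have "?k * mu = - ((?c\<^sup>2 + ?s\<^sup>2) / (mu * (2 * ?s * ?c)))"
    using assms(3) \<open>?s > 0\<close> by (simp add: field_simps power2_eq_square)
  also have "\<bar>\<dots>\<bar> = (?c\<^sup>2 + ?s\<^sup>2) / (mu * (2 * ?s * ?c))"
    using \<open>?s > 0\<close> assms(3) by simp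
  also have "\<dots> = 1 / (mu * tanh (2 * \<theta>))"
    by (simp add: tanh_def sinh_double cosh_double)
  finally show ?thesis .
qed

lemma tanh_artanh_real:
  fixes y :: real
  assumes "\<bar>y\<bar> < 1"
  shows "tanh (artanh y) = y"
proof -
  have "1 + y > 0" "1 - y > 0"
    using assms by auto
  then have "- 2 * artanh y = ln ((1 - y) / (1 + y))"
    by (simp add: artanh_def ln_div)
  then have exp: "exp (- 2 * artanh y) = (1 - y) / (1 + y)"
    using \<open>1 + y > 0\<close> \<open>1 - y > 0\<close> by simp
  show ?thesis
    unfolding tanh_real_altdef exp using \<open>1 + y > 0\<close> by (simp add: field_simps)
qed

theorem mainTheorem7:
  fixes lam mu nu C :: real
  assumes "lam > 0" and "mu > 0" and "nu = mu" and "C > 1 / mu"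
  shows "\<exists>\<theta>>0. \<forall>\<alpha> \<beta>. mean_curv_norm lam mu nu (torusU \<theta>) (\<alpha>, \<beta>) = C"
proof -
  define y where "y = 1 / (mu * C)"
  have "0 < y" "y < 1"
    using assms(2,4) by (auto simp: y_def field_simps)
  define \<theta> where "\<theta> = artanh y / 2"
  have tanh: "tanh (2 * \<theta>) = y"
    using \<open>0 < y\<close> \<open>y < 1\<close> by (simp add: \<theta>_def tanh_artanh_real)
  then have "\<theta> > 0"
    using \<open>0 < y\<close> tanh_real_pos_iff by fastforce
  moreover have "mean_curv_norm lam mu nu (torusU \<theta>) (\<alpha>, \<beta>) = C" for \<alpha> \<beta>
    using mean_curv_norm_torusU[OF \<open>\<theta> > 0\<close>] assms tanh by (simp add: y_def)
  ultimately show ?thesis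
    by blast
qed

end
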